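(* Let $T:\mathbb{Z}_{\ge 0}\to\mathbb{R}$ satisfy $T(mn) = T(m)T(n) + T(m-1)T(n-1)$ for all integers $m,n\ge 1$, and suppose $T(0)=0$ and $T(1)=1$. Write $c=T(2)$ and $d=T(3)$. Then $c^2+2c-1\neq 0$ and $$d=\frac{3c^3+c}{c^2+2c-1}.$$ Consequently, $T(n)$ for each $n\ge 2$ is uniquely determined by the value of $c$ alone: if $T'$ is another sequence satisfying the same product rule with $T'(0)=0$, $T'(1)=1$ and $T'(2)=c$, then $T'(n)=T(n)$ for all $n\ge 0$. *)

theory Defs
  imports Complex_Main
begin

definition product_rule :: "(nat \<Rightarrow> real) \<Rightarrow> bool" where
  "product_rule T \<longleftrightarrow>
     (\<forall>m n. m \<ge> 1 \<longrightarrow> n \<ge> 1 \<longrightarrow> T (m * n) = T m * T n + T (m - 1) * T (n - 1))"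

end

theory Submission
  imports Defs
begin

text \<open>
  With \<open>m = 2\<close> the product rule gives
  \<open>T (2k) = c T(k) + T(k - 1)\<close>, and comparing it with the case \<open>m = 4\<close> gives
  \<open>T (2k - 1) = T k + (d - c) T (k - 1)\<close>. These two recursions determine \<open>T\<close> from \<open>c\<close> and \<open>d\<close>.
  Evaluating \<open>T 18\<close> both as \<open>T (3 \<cdot> 6)\<close> and as \<open>T (2 \<cdot> 9)\<close>, and reducing the
  arguments \<open>5, 6, 8, 9\<close> by the recursions, yields
  \<open>d (c\<^sup>2 + 2c - 1) = 3c\<^sup>3 + c\<close>. If the bracket vanished, then \<open>c (3c\<^sup>2 + 1) = 0\<close>, so
  \<open>c = 0\<close>, contradicting \<open>c\<^sup>2 + 2c - 1 = 0\<close>.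
\<close>

lemma product_ruleD:
  assumes "product_rule T" and "1 \<le> m" and "1 \<le> n"
  shows "T (m * n) = T m * T n + T (m - 1) * T (n - 1)"
  using assms unfolding product_rule_def by blast

lemma product_rule_double:
  assumes "product_rule T" and "T 1 = 1" and "1 \<le> k"
  shows "T (2 * k) = T 2 * T k + T (k - 1)"
  using product_ruleD[OF assms(1), of 2 k] assms(2,3) by simp

lemma product_rule_four:
  assumes "product_rule T" and "T 1 = 1"
  shows "T 4 = T 2 ^ 2 + 1"
  using product_rule_double[OF assms, of 2] assms(2) by (simp add: power2_eq_square)

lemma product_rule_pred_double:
  assumes "product_rule T" and "T 1 = 1" and "1 \<le> k"
  shows "T (2 * k - 1) = T k + (T 3 - T 2) * T (k - 1)"
proof -
  have "T (4 * k) = T 4 * T k + T 3 * T (k - 1)"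
    using product_ruleD[OF assms(1), of 4 k] assms(3) by simp
  moreover have "T (4 * k) = T 2 * T (2 * k) + T (2 * k - 1)"
    using product_rule_double[OF assms(1,2), of "2 * k"] assms(3) by (simp add: mult.assoc)
  ultimately show ?thesis
    using product_rule_double[OF assms] product_rule_four[OF assms(1,2)]
    by (simp add: algebra_simps power2_eq_square)
qed

lemma product_rule_relation_2_3:
  assumes "product_rule T" and "T 1 = 1"
  shows "T 3 * (T 2 ^ 2 + 2 * T 2 - 1) = 3 * T 2 ^ 3 + T 2"
proof -
  have T4: "T 4 = T 2 ^ 2 + 1"
    using product_rule_four[OF assms] .
  have T5: "T 5 = T 3 + (T 3 - T 2) * T 2"
    using product_rule_pred_double[OF assms, of 3] assms(2) by simp
  have T6: "T 6 = T 2 * T 3 + T 2"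
    using product_rule_double[OF assms, of 3] by simp
  have T8: "T 8 = T 2 * T 4 + T 3"
    using product_rule_double[OF assms, of 4] by simp
  have T9: "T 9 = T 3 ^ 2 + T 2 ^ 2"
    using product_ruleD[OF assms(1), of 3 3] by (simp add: power2_eq_square)
  have "T 18 = T 3 * T 6 + T 2 * T 5"
    using product_ruleD[OF assms(1), of 3 6] by simp
  moreover have "T 18 = T 2 * T 9 + T 8"
    using product_rule_double[OF assms, of 9] by simp
  ultimately have "T 3 * T 6 + T 2 * T 5 = T 2 * T 9 + T 8"
    by simp
  then show ?thesis
    unfolding T4 T5 T6 T8 T9 by (simp add: algebra_simps power2_eq_square power3_eq_cube)
qed

lemma product_rule_denominator_nonzero:
  assumes "product_rule T" and "T 1 = 1"
  shows "T 2 ^ 2 + 2 * T 2 - 1 \<noteq> 0"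
proof
  assume zero: "T 2 ^ 2 + 2 * T 2 - 1 = 0"
  then have "T 2 * (3 * T 2 ^ 2 + 1) = 0"
    using product_rule_relation_2_3[OF assms]
    by (simp add: algebra_simps power2_eq_square power3_eq_cube)
  moreover have "3 * T 2 ^ 2 + 1 \<noteq> 0"
    by (smt (verit) zero_le_power2)
  ultimately have "T 2 = 0"
    by simp
  with zero show False
    by simp
qed

lemma product_rule_eqI:
  assumes "product_rule T" and "product_rule T'"
    and "T 0 = T' 0" and "T 1 = 1" and "T' 1 = 1" and "T 2 = T' 2" and "T 3 = T' 3"
  shows "T n = T' n"
proof (induction n rule: less_induct)
  case (less n)
  show ?case
  proof (cases "n \<le> 3")
    case True
    then have "n \<in> {0, 1, 2, 3}"
      by auto
    then show ?thesis
      using assms(3-7) by auto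
  next
    case False
    obtain k where n: "n = 2 * k \<or> n = 2 * k - 1" and k: "1 \<le> k"
    proof (cases "even n")
      case True
      then show ?thesis
        using False that[of "n div 2"] by auto
    next
      case odd: False
      have "n = 2 * ((n + 1) div 2) - 1" and "1 \<le> (n + 1) div 2"
        using odd False by presburger+
      then show ?thesis
        using that by blast
    qed
    have "k < n"
      using n k False by auto
    then have "T k = T' k" and "T (k - 1) = T' (k - 1)"
      using less.IH by auto
    with n show ?thesis
      using product_rule_double[OF assms(1,4) k] product_rule_double[OF assms(2,5) k]
        product_rule_pred_double[OF assms(1,4) k] product_rule_pred_double[OF assms(2,5) k]
        assms(6,7) by auto
  qed
qed

theorem lemma10:
  fixes T :: "nat \<Rightarrow> real" and c d :: real
  assumes "product_rule T" and "T 0 = 0" and "T 1 = 1"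
    and "c = T 2" and "d = T 3"
  shows "c ^ 2 + 2 * c - 1 \<noteq> 0
    \<and> d = (3 * c ^ 3 + c) / (c ^ 2 + 2 * c - 1)
    \<and> (\<forall>T' :: nat \<Rightarrow> real. product_rule T' \<and> T' 0 = 0 \<and> T' 1 = 1 \<and> T' 2 = c
           \<longrightarrow> (\<forall>n. T' n = T n))"
proof (intro conjI allI impI)
  have relation: "d * (c ^ 2 + 2 * c - 1) = 3 * c ^ 3 + c"
    using product_rule_relation_2_3[OF assms(1,3)] assms(4,5) by simp
  show nonzero: "c ^ 2 + 2 * c - 1 \<noteq> 0"
    using product_rule_denominator_nonzero[OF assms(1,3)] assms(4) by simp
  show "d = (3 * c ^ 3 + c) / (c ^ 2 + 2 * c - 1)"
    using relation nonzero by (simp add: eq_divide_eq)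
  fix T' :: "nat \<Rightarrow> real" and n
  assume T': "product_rule T' \<and> T' 0 = 0 \<and> T' 1 = 1 \<and> T' 2 = c"
  then have "T' 3 * (c ^ 2 + 2 * c - 1) = 3 * c ^ 3 + c"
    using product_rule_relation_2_3[of T'] by simp
  with relation have "T' 3 * (c ^ 2 + 2 * c - 1) = T 3 * (c ^ 2 + 2 * c - 1)"
    using assms(5) by simp
  with nonzero have "T' 3 = T 3"
    by simp
  then show "T' n = T n"
    using product_rule_eqI[of T' T] T' assms by simp
qed

end
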